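(* Let $\ell$ be a positive integer and let $(T^-,T^+)$ be an ordered pair of rooted plane trees with a total of $\ell-1$ edges. Number the levels of each tree so that its root is at level $1$. Call the non-root vertices at odd levels of $T^-$ and at even levels of $T^+$ "low", and the non-root vertices at even levels of $T^-$ and at odd levels of $T^+$ "high". Label the low vertices with $1,2,3,\dots$ consecutively, processing levels from the deepest upward and, within a level, from left to right; label the high vertices with $\ell,\ell-1,\ell-2,\dots$ consecutively in the same order (deepest level first, left to right within a level). Let $b\in[\ell]$ be the unique label not used, and label the roots of $T^-$ and $T^+$ by $b^-$ and $b^+$. Define $\mu:[\ell]\to[\ell]$ by $\mu(b)=b$ and, for $i\neq b$, $\mu(i)=$ the label of the parent of the vertex labelled $i$, where a parent labelled $b^\pm$ is read as $b$. Then $\mu$ is a partition (weakly decreasing) and $\mu\in\mathcal{P}^\ell(1)$.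
   Context: $[n]=\{1,\dots,n\}$. A rooted plane tree is a rooted tree in which the children of each vertex are linearly ordered (left to right). $\mathcal{P}^\ell$ denotes the set of partitions $(\mu_1\geq\dots\geq\mu_\ell>0)$ with exactly $\ell$ parts and $\mu_1\leq\ell$, regarded as weakly decreasing maps $[\ell]\to[\ell]$. $\tau_\ell:\mathcal{P}^\ell\to\mathcal{P}^\ell$ is $\tau_\ell(\mu_1,\dots,\mu_\ell)=(\ell+1-\mu_\ell,\dots,\ell+1-\mu_1)$. The sets $\mathcal{P}^\ell(1)\subseteq\mathcal{P}^\ell$ are defined inductively by $\mathcal{P}^1(1)=\{(1)\}$ and, for $\ell\geq2$, $\mathcal{P}^\ell(1)=D_\ell\cup\tau_\ell(D_\ell)$ where $D_\ell=\{\mu\in\mathcal{P}^\ell:(\mu_1,\dots,\mu_{\ell-1})\in\mathcal{P}^{\ell-1}(1)\}$. *)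

theory Defs
  imports Main
begin

datatype ptree = Node "ptree list"

fun edges :: "ptree \<Rightarrow> nat" where
  "edges (Node ts) = length ts + sum_list (map edges ts)"

text \<open>Vertices are addressed by paths from the root (list of child indices).
  The root is the empty path; the vertex at path p lies at level (length p + 1).\<close>
inductive path_in :: "ptree \<Rightarrow> nat list \<Rightarrow> bool" where
  root: "path_in t []"
| child: "i < length ts \<Longrightarrow> path_in (ts ! i) p \<Longrightarrow> path_in (Node ts) (i # p)"

text \<open>A vertex of the pair is (s, p): s = False means T^-, s = True means T^+.\<close>
type_synonym vtx = "bool \<times> nat list"

definition nonroot_verts :: "ptree \<Rightarrow> ptree \<Rightarrow> vtx set" where
  "nonroot_verts Tm Tp = {(s, p). p \<noteq> [] \<and> path_in (if s then Tp else Tm) p}"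

fun is_low :: "vtx \<Rightarrow> bool" where
  "is_low (s, p) = (if s then even (length p + 1) else odd (length p + 1))"

text \<open>Processing order: deeper levels first; within a level, left to right
  (lexicographic order of paths of equal length).\<close>
fun before :: "vtx \<Rightarrow> vtx \<Rightarrow> bool" where
  "before (s, p) (s', q) =
     (length q < length p \<or> (length p = length q \<and> (p, q) \<in> lexord less_than))"

definition lab :: "nat \<Rightarrow> ptree \<Rightarrow> ptree \<Rightarrow> vtx \<Rightarrow> nat" where
  "lab l Tm Tp v =
     (if is_low v then 1 + card {w \<in> nonroot_verts Tm Tp. is_low w \<and> before w v}
      else l - card {w \<in> nonroot_verts Tm Tp. \<not> is_low w \<and> before w v})"

definition blab :: "nat \<Rightarrow> ptree \<Rightarrow> ptree \<Rightarrow> nat" where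
  "blab l Tm Tp = (THE b. b \<in> {1..l} \<and> b \<notin> lab l Tm Tp ` nonroot_verts Tm Tp)"

definition labr :: "nat \<Rightarrow> ptree \<Rightarrow> ptree \<Rightarrow> vtx \<Rightarrow> nat" where
  "labr l Tm Tp v = (if snd v = [] then blab l Tm Tp else lab l Tm Tp v)"

fun parent :: "vtx \<Rightarrow> vtx" where
  "parent (s, p) = (s, butlast p)"

definition mu_fun :: "nat \<Rightarrow> ptree \<Rightarrow> ptree \<Rightarrow> nat \<Rightarrow> nat" where
  "mu_fun l Tm Tp i =
     (if i = blab l Tm Tp then blab l Tm Tp
      else labr l Tm Tp (parent (THE v. v \<in> nonroot_verts Tm Tp \<and> lab l Tm Tp v = i)))"

definition mu_list :: "nat \<Rightarrow> ptree \<Rightarrow> ptree \<Rightarrow> nat list" where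
  "mu_list l Tm Tp = map (mu_fun l Tm Tp) [1..<l+1]"

definition Pl :: "nat \<Rightarrow> nat list set" where
  "Pl l = {mu. length mu = l \<and> sorted_wrt (\<ge>) mu \<and> (\<forall>x \<in> set mu. 1 \<le> x \<and> x \<le> l)}"

definition tau :: "nat \<Rightarrow> nat list \<Rightarrow> nat list" where
  "tau l mu = rev (map (\<lambda>x. l + 1 - x) mu)"

fun P1 :: "nat \<Rightarrow> nat list set" where
  "P1 0 = {}"
| "P1 (Suc 0) = {[1]}"
| "P1 (Suc (Suc n)) =
     (let D = {mu \<in> Pl (Suc (Suc n)). butlast mu \<in> P1 (Suc n)} in D \<union> tau (Suc (Suc n)) ` D)"

end

theory Submission
  imports Defs
begin

text \<open>
  With L low vertices, the low vertices receive the labels 1, ..., L and the high vertices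
  L+2, ..., l, so b = L+1. The parent of a low vertex is high or a root, and vice versa, and
  passing to parents preserves the processing order of vertices of the same kind. Hence mu
  is weakly decreasing on each of the blocks [1, L], {L+1}, [L+2, l], and it maps them into
  [L+1, l], {L+1} and [1, L+1] respectively, so mu is a partition.

  Membership in P^l(1) follows by induction on the number of vertices. Exchanging T^- and T^+
  exchanges low and high vertices and turns mu into tau_l(mu), so we may assume that some
  deepest vertex is high. Then the vertex labelled l is a deepest high vertex, hence a leaf,
  and deleting it leaves all other labels unchanged and deletes the last entry of mu.
\<close>

lemma before_irrefl: "\<not> before v v"
  by (cases v) (auto simp: lexord_irreflexive)

lemma before_trans: "before u v \<Longrightarrow> before v w \<Longrightarrow> before u w"
  by (cases u; cases v; cases w) (auto intro: lexord_trans)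

lemma same_side_if_is_low_eq:
  "is_low (s, p) = is_low (s', q) \<Longrightarrow> length p = length q \<Longrightarrow> s = s'"
  by (cases s; cases s') auto

lemma before_total: "is_low v = is_low w \<Longrightarrow> v \<noteq> w \<Longrightarrow> before v w \<or> before w v"
proof (cases v, cases w)
  fix s p s' q
  assume v: "v = (s, p)" and w: "w = (s', q)" and "is_low v = is_low w" "v \<noteq> w"
  then have "length p = length q \<Longrightarrow> p \<noteq> q"
    using same_side_if_is_low_eq by blast
  moreover have "(p, q) \<in> lexord less_than \<or> p = q \<or> (q, p) \<in> lexord less_than"
    by (rule lexord_linear) auto
  ultimately show ?thesis
    using v w by auto
qed

lemma snd_parent [simp]: "snd (parent v) = butlast (snd v)"
  by (cases v) simp

lemma before_parent:
  assumes "is_low v = is_low w" "before v w" "snd v \<noteq> []" "snd (parent w) \<noteq> []"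
  shows "snd (parent v) \<noteq> [] \<and> (parent v = parent w \<or> before (parent v) (parent w))"
proof (cases v, cases w)
  fix s p s' q
  assume v: "v = (s, p)" and w: "w = (s', q)"
  show ?thesis
  proof (cases "length p = length q")
    case True
    then have "s = s'"
      using same_side_if_is_low_eq assms(1) v w by blast
    have "(p, q) \<in> lexord less_than" "p \<noteq> []" "q \<noteq> []"
      using assms True v w by auto
    then have "butlast p = butlast q \<or> (butlast p, butlast q) \<in> lexord less_than"
      using lexord_sufE[of "butlast p" "[last p]" "butlast q" "[last q]"] True by force
    moreover have "butlast p \<noteq> []"
      using assms True v w by (metis length_butlast length_0_conv snd_conv snd_parent)
    ultimately show ?thesis
      using \<open>s = s'\<close> True v w by auto
  next
    case False
    then have "length q < length p" "q \<noteq> []"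
      using assms v w by auto
    then have "length (butlast q) < length (butlast p)"
      by (cases q) auto
    then have "butlast p \<noteq> []"
      by (metis less_nat_zero_code list.size(3))
    with \<open>length (butlast q) < length (butlast p)\<close> show ?thesis
      using v w by simp
  qed
qed

lemma is_low_parent: "snd v \<noteq> [] \<Longrightarrow> is_low (parent v) \<longleftrightarrow> \<not> is_low v"
  by (cases v) auto

lemma finite_ex_max_image:
  fixes f :: "'a \<Rightarrow> 'b::linorder"
  assumes "finite A" "A \<noteq> {}"
  obtains x where "x \<in> A" "\<And>y. y \<in> A \<Longrightarrow> f y \<le> f x"
proof -
  have "Max (f ` A) \<in> f ` A"
    using assms by (intro Max_in) auto
  then obtain x where "x \<in> A" "f x = Max (f ` A)"
    by auto
  then show thesis
    using that assms by simp
qed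

text \<open>
  The labelling of Defs relative to an arbitrary vertex set N, so that N can shrink in the
  induction.
\<close>

definition lab_on :: "vtx set \<Rightarrow> nat \<Rightarrow> vtx \<Rightarrow> nat" where
  "lab_on N l v =
     (if is_low v then 1 + card {w \<in> N. is_low w \<and> before w v}
      else l - card {w \<in> N. \<not> is_low w \<and> before w v})"

definition blab_on :: "vtx set \<Rightarrow> nat \<Rightarrow> nat" where
  "blab_on N l = (THE b. b \<in> {1..l} \<and> b \<notin> lab_on N l ` N)"

definition labr_on :: "vtx set \<Rightarrow> nat \<Rightarrow> vtx \<Rightarrow> nat" where
  "labr_on N l v = (if snd v = [] then blab_on N l else lab_on N l v)"

definition vertex_on :: "vtx set \<Rightarrow> nat \<Rightarrow> nat \<Rightarrow> vtx" where
  "vertex_on N l i = (THE v. v \<in> N \<and> lab_on N l v = i)"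

definition mu_on :: "vtx set \<Rightarrow> nat \<Rightarrow> nat \<Rightarrow> nat" where
  "mu_on N l i =
     (if i = blab_on N l then blab_on N l else labr_on N l (parent (vertex_on N l i)))"

definition mu_list_on :: "vtx set \<Rightarrow> nat \<Rightarrow> nat list" where
  "mu_list_on N l = map (mu_on N l) [1..<l+1]"

lemma mu_list_eq_mu_list_on: "mu_list l Tm Tp = mu_list_on (nonroot_verts Tm Tp) l"
  unfolding mu_list_def mu_list_on_def mu_fun_def mu_on_def labr_def labr_on_def blab_def
    blab_on_def vertex_on_def lab_def lab_on_def ..

locale tree_pair_vertices =
  fixes N :: "vtx set" and l :: nat
  assumes finite_N: "finite N"
    and nonroot: "\<And>v. v \<in> N \<Longrightarrow> snd v \<noteq> []"
    and parent_closed: "\<And>v. v \<in> N \<Longrightarrow> snd (parent v) \<noteq> [] \<Longrightarrow> parent v \<in> N"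
    and card_eq: "card N + 1 = l"
begin

abbreviation "nlow \<equiv> card {w \<in> N. is_low w}"
abbreviation "nhigh \<equiv> card {w \<in> N. \<not> is_low w}"
abbreviation "label \<equiv> lab_on N l"
abbreviation "labelr \<equiv> labr_on N l"
abbreviation "mu \<equiv> mu_on N l"

lemma nlow_nhigh: "nlow + nhigh + 1 = l"
proof -
  have "nlow + nhigh = card ({w \<in> N. is_low w} \<union> {w \<in> N. \<not> is_low w})"
    using finite_N by (intro card_Un_disjoint[symmetric]) auto
  also have "{w \<in> N. is_low w} \<union> {w \<in> N. \<not> is_low w} = N"
    by blast
  finally show ?thesis
    using card_eq by simp
qed

lemma label_low_mono:
  assumes "v \<in> N" "is_low v" "is_low w" "before v w"
  shows "label v < label w"
proof -
  have "{x \<in> N. is_low x \<and> before x v} \<subset> {x \<in> N. is_low x \<and> before x w}"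
    using assms before_trans before_irrefl by blast
  then show ?thesis
    using assms finite_N psubset_card_mono[of "{x \<in> N. is_low x \<and> before x w}"]
    by (simp add: lab_on_def)
qed

lemma label_high_antimono:
  assumes "v \<in> N" "\<not> is_low v" "\<not> is_low w" "before v w"
  shows "label w < label v"
proof -
  have "{x \<in> N. \<not> is_low x \<and> before x v} \<subset> {x \<in> N. \<not> is_low x \<and> before x w}"
    using assms before_trans before_irrefl by blast
  then have "card {x \<in> N. \<not> is_low x \<and> before x v} < card {x \<in> N. \<not> is_low x \<and> before x w}"
    using finite_N by (intro psubset_card_mono) auto
  moreover have "card {x \<in> N. \<not> is_low x \<and> before x w} \<le> card N"
    using finite_N by (intro card_mono) auto
  ultimately show ?thesis
    using assms card_eq by (simp add: lab_on_def)
qed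

lemma label_low_range:
  assumes "v \<in> N" "is_low v"
  shows "1 \<le> label v \<and> label v \<le> nlow"
proof -
  have "{x \<in> N. is_low x \<and> before x v} \<subset> {w \<in> N. is_low w}"
    using assms before_irrefl by blast
  then have "card {x \<in> N. is_low x \<and> before x v} < nlow"
    using finite_N by (intro psubset_card_mono) auto
  then show ?thesis
    using assms by (simp add: lab_on_def)
qed

lemma label_high_range:
  assumes "v \<in> N" "\<not> is_low v"
  shows "nlow + 2 \<le> label v \<and> label v \<le> l"
proof -
  have "{x \<in> N. \<not> is_low x \<and> before x v} \<subset> {w \<in> N. \<not> is_low w}"
    using assms before_irrefl by blast
  then have "card {x \<in> N. \<not> is_low x \<and> before x v} < nhigh"
    using finite_N by (intro psubset_card_mono) auto
  then show ?thesis
    using assms nlow_nhigh by (simp add: lab_on_def)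
qed

lemma inj_on_label: "inj_on label N"
proof
  fix v w
  assume vw: "v \<in> N" "w \<in> N" "label v = label w"
  show "v = w"
  proof (rule ccontr)
    assume "v \<noteq> w"
    show False
    proof (cases "is_low v = is_low w")
      case True
      then have "before v w \<or> before w v"
        using before_total \<open>v \<noteq> w\<close> by blast
      then show False
        using True vw label_low_mono[of v w] label_low_mono[of w v]
          label_high_antimono[of v w] label_high_antimono[of w v] by auto
    next
      case False
      then show False
        using vw label_low_range[of v] label_high_range[of w]
          label_low_range[of w] label_high_range[of v] by auto
    qed
  qed
qed

lemma label_image: "label ` N = {1..l} - {nlow + 1}"
proof -
  have inj: "inj_on label {w \<in> N. P w}" for P
    by (rule inj_on_subset[OF inj_on_label]) auto
  have low: "label ` {w \<in> N. is_low w} = {1..nlow}"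
  proof (rule card_subset_eq)
    show "label ` {w \<in> N. is_low w} \<subseteq> {1..nlow}"
      using label_low_range by auto
    show "card (label ` {w \<in> N. is_low w}) = card {1..nlow}"
      using card_image[OF inj] by simp
  qed simp
  have high: "label ` {w \<in> N. \<not> is_low w} = {nlow + 2..l}"
  proof (rule card_subset_eq)
    show "label ` {w \<in> N. \<not> is_low w} \<subseteq> {nlow + 2..l}"
      using label_high_range by auto
    show "card (label ` {w \<in> N. \<not> is_low w}) = card {nlow + 2..l}"
      using card_image[OF inj] nlow_nhigh by simp
  qed simp
  have "label ` N = label ` {w \<in> N. is_low w} \<union> label ` {w \<in> N. \<not> is_low w}"
    by blast
  also have "\<dots> = {1..nlow} \<union> {nlow + 2..l}"
    unfolding low high ..
  also have "\<dots> = {1..l} - {nlow + 1}"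
    using nlow_nhigh by auto
  finally show ?thesis .
qed

lemma blab_on_eq: "blab_on N l = nlow + 1"
  unfolding blab_on_def using label_image nlow_nhigh by (intro the_equality) auto

lemma vertex_on_label: "v \<in> N \<Longrightarrow> vertex_on N l (label v) = v"
  unfolding vertex_on_def by (rule the_equality) (use inj_on_label in \<open>auto dest: inj_onD\<close>)

lemma mu_on_blab: "mu (nlow + 1) = nlow + 1"
  by (simp add: mu_on_def blab_on_eq)

lemma mu_on_label: "v \<in> N \<Longrightarrow> mu (label v) = labelr (parent v)"
  using label_image vertex_on_label by (auto simp: mu_on_def blab_on_eq)

lemma low_vertex_with_label:
  assumes "i \<in> {1..nlow}"
  obtains v where "v \<in> N" "is_low v" "label v = i"
proof -
  have "i \<in> label ` N"
    using assms label_image nlow_nhigh by auto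
  then obtain v where "v \<in> N" "label v = i"
    by blast
  moreover have "is_low v"
    using label_high_range calculation assms by fastforce
  ultimately show thesis
    using that by blast
qed

lemma mu_low_range:
  assumes "i \<in> {1..nlow}"
  shows "nlow + 1 \<le> mu i \<and> mu i \<le> l"
proof -
  obtain v where v: "v \<in> N" "is_low v" "label v = i"
    using low_vertex_with_label assms by blast
  show ?thesis
  proof (cases "snd (parent v) = []")
    case True
    then show ?thesis
      using v mu_on_label[OF v(1)] nlow_nhigh by (simp add: labr_on_def blab_on_eq)
  next
    case False
    then have "parent v \<in> N" "\<not> is_low (parent v)"
      using v parent_closed is_low_parent nonroot by auto
    then show ?thesis
      using v False mu_on_label[OF v(1)] label_high_range[of "parent v"] by (simp add: labr_on_def)
  qed
qed

lemma mu_low_antimono: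
  assumes "1 \<le> i" "i < j" "j \<le> nlow"
  shows "mu j \<le> mu i"
proof -
  obtain v where v: "v \<in> N" "is_low v" "label v = i"
    using low_vertex_with_label[of i] assms by auto
  obtain w where w: "w \<in> N" "is_low w" "label w = j"
    using low_vertex_with_label[of j] assms by auto
  have "before v w"
    using before_total[of v w] label_low_mono[OF w(1,2) v(2)] v w assms by auto
  show ?thesis
  proof (cases "snd (parent w) = []")
    case True
    then show ?thesis
      using mu_on_label[OF w(1)] w(3) mu_low_range[of i] assms
      by (simp add: labr_on_def blab_on_eq)
  next
    case False
    then have "snd (parent v) \<noteq> []" and parents: "parent v = parent w \<or> before (parent v) (parent w)"
      using before_parent[of v w] \<open>before v w\<close> v(2) w(2) nonroot[OF v(1)] by simp_all
    then have "parent v \<in> N" "\<not> is_low (parent v)" "\<not> is_low (parent w)"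
      using v w False parent_closed is_low_parent nonroot by auto
    then have "label (parent w) \<le> label (parent v)"
      using parents label_high_antimono[of "parent v" "parent w"] by auto
    then show ?thesis
      using mu_on_label[OF v(1)] mu_on_label[OF w(1)] v(3) w(3) False \<open>snd (parent v) \<noteq> []\<close>
      by (simp add: labr_on_def)
  qed
qed

end


subsection \<open>Exchanging the two trees\<close>

fun swap_side :: "vtx \<Rightarrow> vtx" where
  "swap_side (s, p) = (\<not> s, p)"

lemma swap_side_swap_side [simp]: "swap_side (swap_side v) = v"
  by (cases v) auto

lemma inj_on_swap_side: "inj_on swap_side A"
  by (metis inj_onI swap_side_swap_side)

lemma is_low_swap_side [simp]: "is_low (swap_side v) \<longleftrightarrow> \<not> is_low v"
  by (cases v) auto

lemma before_swap_side [simp]: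
  "before (swap_side v) w = before v w" "before v (swap_side w) = before v w"
  by (cases v; cases w; auto)+

lemma parent_swap_side [simp]: "parent (swap_side v) = swap_side (parent v)"
  by (cases v) auto

lemma snd_swap_side [simp]: "snd (swap_side v) = snd v"
  by (cases v) auto

lemma Collect_swap_side_image: "{w \<in> swap_side ` N. P w} = swap_side ` {w \<in> N. P (swap_side w)}"
  by (auto intro: rev_image_eqI)

lemma card_Collect_swap_side_image:
  "card {w \<in> swap_side ` N. P w} = card {w \<in> N. P (swap_side w)}"
  unfolding Collect_swap_side_image by (rule card_image[OF inj_on_swap_side])

context tree_pair_vertices
begin

lemma tree_pair_vertices_swap_side: "tree_pair_vertices (swap_side ` N) l"
proof
  show "finite (swap_side ` N)"
    using finite_N by simp
  show "card (swap_side ` N) + 1 = l"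
    using card_eq card_image[OF inj_on_swap_side] by metis
next
  fix v
  assume "v \<in> swap_side ` N"
  then obtain u where u: "u \<in> N" "v = swap_side u"
    by blast
  then show "snd v \<noteq> []"
    using nonroot by simp
  assume "snd (parent v) \<noteq> []"
  then show "parent v \<in> swap_side ` N"
    using u parent_closed[of u] by auto
qed

lemma nlow_swap_side: "card {w \<in> swap_side ` N. is_low w} = nhigh"
  by (simp add: card_Collect_swap_side_image)

lemma label_swap_side:
  assumes "v \<in> N"
  shows "lab_on (swap_side ` N) l (swap_side v) = l + 1 - label v"
  using label_high_range[OF assms] by (simp add: lab_on_def card_Collect_swap_side_image; arith)

lemma mu_on_swap_side:
  assumes "i \<in> {1..l}"
  shows "mu_on (swap_side ` N) l i = l + 1 - mu (l + 1 - i)"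
proof -
  interpret S: tree_pair_vertices "swap_side ` N" l
    by (rule tree_pair_vertices_swap_side)
  show ?thesis
  proof (cases "i = nhigh + 1")
    case True
    then have "l + 1 - i = nlow + 1"
      using nlow_nhigh by simp
    then show ?thesis
      using True S.mu_on_blab mu_on_blab nlow_swap_side nlow_nhigh by simp
  next
    case False
    then have "l + 1 - i \<in> label ` N"
      using assms label_image nlow_nhigh by auto
    then obtain v where v: "v \<in> N" "label v = l + 1 - i"
      by auto
    have "S.labelr (swap_side (parent v)) = l + 1 - labelr (parent v)"
    proof (cases "snd (parent v) = []")
      case True
      then show ?thesis
        using S.blab_on_eq blab_on_eq nlow_swap_side nlow_nhigh by (simp add: labr_on_def)
    next
      case False
      then show ?thesis
        using label_swap_side[of "parent v"] parent_closed[OF v(1)] by (simp add: labr_on_def)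
    qed
    moreover have "S.label (swap_side v) = i"
      using label_swap_side[OF v(1)] v(2) assms by simp
    ultimately show ?thesis
      using S.mu_on_label[of "swap_side v"] mu_on_label[OF v(1)] v by simp
  qed
qed

lemma mu_list_on_swap_side: "mu_list_on (swap_side ` N) l = tau l (mu_list_on N l)"
proof (rule nth_equalityI)
  show "length (mu_list_on (swap_side ` N) l) = length (tau l (mu_list_on N l))"
    by (simp add: mu_list_on_def tau_def)
next
  fix k
  assume "k < length (mu_list_on (swap_side ` N) l)"
  then have "k < l"
    by (simp add: mu_list_on_def del: upt_Suc)
  then show "mu_list_on (swap_side ` N) l ! k = tau l (mu_list_on N l) ! k"
    using mu_on_swap_side[of "Suc k"]
    by (simp add: mu_list_on_def tau_def rev_nth Suc_diff_Suc del: upt_Suc)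
qed

text \<open>The high block of N is the low block of the swapped vertex set.\<close>

lemma mu_high_range:
  assumes "i \<in> {nlow + 2..l}"
  shows "1 \<le> mu i \<and> mu i \<le> nlow + 1"
proof -
  interpret S: tree_pair_vertices "swap_side ` N" l
    by (rule tree_pair_vertices_swap_side)
  have "l + 1 - i \<in> {1..nhigh}" "l + 1 - (l + 1 - i) = i"
    using assms nlow_nhigh by auto
  then have "nhigh + 1 \<le> l + 1 - mu i \<and> l + 1 - mu i \<le> l"
    using S.mu_low_range[of "l + 1 - i"] mu_on_swap_side[of "l + 1 - i"] nlow_nhigh
    by (simp add: nlow_swap_side)
  then show ?thesis
    using nlow_nhigh by linarith
qed

lemma mu_high_antimono:
  assumes "nlow + 2 \<le> i" "i < j" "j \<le> l"
  shows "mu j \<le> mu i"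
proof -
  interpret S: tree_pair_vertices "swap_side ` N" l
    by (rule tree_pair_vertices_swap_side)
  have "l + 1 - mu i \<le> l + 1 - mu j"
    using S.mu_low_antimono[of "l + 1 - j" "l + 1 - i"] assms nlow_nhigh
      mu_on_swap_side[of "l + 1 - i"] mu_on_swap_side[of "l + 1 - j"]
    by (simp add: nlow_swap_side)
  moreover have "mu i \<le> l" "mu j \<le> l"
    using mu_high_range[of i] mu_high_range[of j] assms nlow_nhigh by auto
  ultimately show ?thesis
    by linarith
qed

lemma mu_antimono:
  assumes "1 \<le> i" "i < j" "j \<le> l"
  shows "mu j \<le> mu i"
proof -
  consider "j \<le> nlow" | "i \<le> nlow + 1" "nlow + 1 \<le> j" | "nlow + 2 \<le> i"
    by linarith
  then show ?thesis
  proof cases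
    case 1
    then show ?thesis
      using mu_low_antimono assms by blast
  next
    case 2
    then have "mu j \<le> nlow + 1"
      using mu_on_blab mu_high_range[of j] assms by (cases "j = nlow + 1") auto
    moreover have "nlow + 1 \<le> mu i"
      using 2 mu_on_blab mu_low_range[of i] assms by (cases "i = nlow + 1") auto
    ultimately show ?thesis
      by linarith
  next
    case 3
    then show ?thesis
      using mu_high_antimono assms by blast
  qed
qed

lemma mu_range: "i \<in> {1..l} \<Longrightarrow> mu i \<in> {1..l}"
  using mu_low_range[of i] mu_on_blab mu_high_range[of i] nlow_nhigh
  by (cases "i \<le> nlow \<or> i = nlow + 1") auto

lemma mu_list_on_in_Pl: "mu_list_on N l \<in> Pl l"
  unfolding Pl_def
proof (intro CollectI conjI ballI)
  show "length (mu_list_on N l) = l"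
    by (simp add: mu_list_on_def)
  show "sorted_wrt (\<ge>) (mu_list_on N l)"
    unfolding sorted_wrt_iff_nth_less
    by (simp add: mu_list_on_def mu_antimono del: upt_Suc)
  show "1 \<le> x" "x \<le> l" if "x \<in> set (mu_list_on N l)" for x
    using that mu_range by (auto simp: mu_list_on_def simp del: upt_Suc)
qed


subsection \<open>Removing the vertex labelled l\<close>

lemma parent_ne_deepest:
  assumes "v \<in> N" and deepest: "\<And>w. w \<in> N \<Longrightarrow> length (snd w) \<le> length (snd u)"
  shows "parent v \<noteq> u"
proof -
  have "length (snd (parent v)) < length (snd v)"
    using nonroot[OF assms(1)] by simp
  then show ?thesis
    using deepest[OF assms(1)] by auto
qed

lemma tree_pair_vertices_remove_deepest:
  assumes "u \<in> N" and deepest: "\<And>w. w \<in> N \<Longrightarrow> length (snd w) \<le> length (snd u)"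
  shows "tree_pair_vertices (N - {u}) (l - 1)"
proof
  show "finite (N - {u})"
    using finite_N by simp
  have "card N > 0"
    using assms(1) finite_N by (auto simp: card_gt_0_iff)
  then show "card (N - {u}) + 1 = l - 1"
    using assms(1) finite_N card_eq by simp
  fix v
  assume v: "v \<in> N - {u}"
  then show "snd v \<noteq> []"
    using nonroot by blast
  assume "snd (parent v) \<noteq> []"
  moreover have "parent v \<noteq> u"
    using v parent_ne_deepest deepest by blast
  ultimately show "parent v \<in> N - {u}"
    using v parent_closed[of v] by simp
qed

lemma not_before_first_high:
  assumes "\<not> is_low u" "label u = l" "w \<in> N" "\<not> is_low w"
  shows "\<not> before w u"
proof
  assume "before w u"
  then have "{x \<in> N. \<not> is_low x \<and> before x u} \<noteq> {}"
    using assms(3,4) by blast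
  then have "card {x \<in> N. \<not> is_low x \<and> before x u} > 0"
    using finite_N by (simp add: card_gt_0_iff)
  moreover have "card {x \<in> N. \<not> is_low x \<and> before x u} \<le> card N"
    using finite_N by (intro card_mono) auto
  ultimately show False
    using assms(1,2) card_eq by (simp add: lab_on_def)
qed

lemma label_remove_first_high:
  assumes u: "u \<in> N" "\<not> is_low u" "label u = l" and w: "w \<in> N" "w \<noteq> u"
  shows "lab_on (N - {u}) (l - 1) w = label w"
proof (cases "is_low w")
  case True
  then have "{x \<in> N - {u}. is_low x \<and> before x w} = {x \<in> N. is_low x \<and> before x w}"
    using u by auto
  then show ?thesis
    using True by (simp add: lab_on_def)
next
  case False
  then have "before u w"
    using before_total[of u w] not_before_first_high[OF u(2,3) w(1) False] u w by blast
  then have "u \<in> {x \<in> N. \<not> is_low x \<and> before x w}"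
    using u by blast
  moreover have "{x \<in> N - {u}. \<not> is_low x \<and> before x w} = {x \<in> N. \<not> is_low x \<and> before x w} - {u}"
    by blast
  ultimately have "card {x \<in> N - {u}. \<not> is_low x \<and> before x w} + 1
      = card {x \<in> N. \<not> is_low x \<and> before x w}"
    using finite_N card_Suc_Diff1[of "{x \<in> N. \<not> is_low x \<and> before x w}" u] by simp
  then show ?thesis
    using False by (simp add: lab_on_def)
qed

lemma mu_list_on_remove_first_high:
  assumes u: "u \<in> N" "\<not> is_low u" "label u = l"
    and deepest: "\<And>w. w \<in> N \<Longrightarrow> length (snd w) \<le> length (snd u)"
  shows "mu_list_on (N - {u}) (l - 1) = butlast (mu_list_on N l)"
proof -
  interpret R: tree_pair_vertices "N - {u}" "l - 1"
    using u(1) deepest by (rule tree_pair_vertices_remove_deepest)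
  have nlow_R: "R.nlow = nlow"
    by (rule arg_cong[where f = card]) (use u(2) in blast)
  have "R.mu i = mu i" if i: "i \<in> {1..l - 1}" for i
  proof (cases "i = nlow + 1")
    case True
    then show ?thesis
      using R.mu_on_blab mu_on_blab nlow_R by simp
  next
    case False
    then have "i \<in> label ` N"
      using i label_image by auto
    then obtain w where w: "w \<in> N" "label w = i"
      by blast
    then have "w \<noteq> u"
      using u i by auto
    then have "R.label w = i"
      using label_remove_first_high u w by simp
    moreover have "R.labelr (parent w) = labelr (parent w)"
    proof (cases "snd (parent w) = []")
      case True
      then show ?thesis
        using R.blab_on_eq blab_on_eq nlow_R by (simp add: labr_on_def)
    next
      case False
      then show ?thesis
        using label_remove_first_high[OF u parent_closed[OF w(1) False]]
          parent_ne_deepest[OF w(1) deepest] by (simp add: labr_on_def)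
    qed
    ultimately show ?thesis
      using w \<open>w \<noteq> u\<close> R.mu_on_label[of w] mu_on_label[OF w(1)] by simp
  qed
  then have "mu_list_on (N - {u}) (l - 1) = map mu [1..<l]"
    using card_eq by (auto simp: mu_list_on_def simp del: upt_Suc)
  also have "\<dots> = butlast (mu_list_on N l)"
    using card_eq by (simp add: mu_list_on_def)
  finally show ?thesis .
qed

lemma mu_list_on_butlast:
  assumes "x \<in> N" "\<not> is_low x" and deepest: "\<And>w. w \<in> N \<Longrightarrow> length (snd w) \<le> length (snd x)"
  obtains N' where "tree_pair_vertices N' (l - 1)" "card N' = card N - 1"
    "mu_list_on N' (l - 1) = butlast (mu_list_on N l)"
proof -
  have "l \<in> label ` N"
    using label_image label_high_range[OF assms(1,2)] by auto
  then obtain u where u: "u \<in> N" "label u = l"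
    by auto
  have high_u: "\<not> is_low u"
    using u label_low_range nlow_nhigh by fastforce
  have "length (snd x) \<le> length (snd u)"
  proof (rule ccontr)
    assume "\<not> length (snd x) \<le> length (snd u)"
    then have "before x u"
      by (cases x, cases u) simp
    then show False
      using not_before_first_high[OF high_u u(2) assms(1,2)] by blast
  qed
  then have deepest_u: "\<And>w. w \<in> N \<Longrightarrow> length (snd w) \<le> length (snd u)"
    using deepest le_trans by blast
  show thesis
  proof (rule that)
    show "tree_pair_vertices (N - {u}) (l - 1)"
      using u(1) deepest_u by (rule tree_pair_vertices_remove_deepest)
    show "card (N - {u}) = card N - 1"
      using u(1) finite_N by simp
    show "mu_list_on (N - {u}) (l - 1) = butlast (mu_list_on N l)"
      using u(1) high_u u(2) deepest_u by (rule mu_list_on_remove_first_high)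
  qed
qed

lemma mu_list_on_reduction:
  assumes "N \<noteq> {}"
  obtains N' where "tree_pair_vertices N' (l - 1)" "card N' = card N - 1"
    "mu_list_on N l \<in> {mu \<in> Pl l. butlast mu = mu_list_on N' (l - 1)}
       \<union> tau l ` {mu \<in> Pl l. butlast mu = mu_list_on N' (l - 1)}"
proof -
  obtain x where x: "x \<in> N" and deepest: "\<And>w. w \<in> N \<Longrightarrow> length (snd w) \<le> length (snd x)"
    using finite_ex_max_image[OF finite_N assms, where f = "\<lambda>w. length (snd w)"] by blast
  show thesis
  proof (cases "is_low x")
    case False
    obtain N' where "tree_pair_vertices N' (l - 1)" "card N' = card N - 1"
      "mu_list_on N' (l - 1) = butlast (mu_list_on N l)"
      using mu_list_on_butlast[OF x False deepest] .
    then show thesis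
      using that mu_list_on_in_Pl by auto
  next
    case True
    interpret S: tree_pair_vertices "swap_side ` N" l
      by (rule tree_pair_vertices_swap_side)
    have "swap_side x \<in> swap_side ` N" "\<not> is_low (swap_side x)"
      using x True by auto
    moreover have "length (snd w) \<le> length (snd (swap_side x))" if "w \<in> swap_side ` N" for w
      using that deepest by auto
    ultimately obtain N' where "tree_pair_vertices N' (l - 1)" "card N' = card N - 1"
      "mu_list_on N' (l - 1) = butlast (mu_list_on (swap_side ` N) l)"
      by (rule S.mu_list_on_butlast[unfolded card_image[OF inj_on_swap_side]])
    moreover have "mu_list_on N l = tau l (mu_list_on (swap_side ` N) l)"
      using S.mu_list_on_swap_side by (simp add: image_image)
    ultimately show thesis
      using that S.mu_list_on_in_Pl by auto
  qed
qed

end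

lemma mu_list_on_in_P1: "tree_pair_vertices N l \<Longrightarrow> mu_list_on N l \<in> P1 l"
proof (induction "card N" arbitrary: N l)
  case 0
  interpret tree_pair_vertices N l
    by (fact "0.prems")
  have "N = {}" "l = 1"
    using 0 finite_N card_eq by auto
  then show ?case
    using mu_on_blab by (simp add: mu_list_on_def)
next
  case (Suc k)
  interpret tree_pair_vertices N l
    by (fact Suc.prems)
  have l: "l = Suc (Suc k)"
    using Suc.hyps(2) card_eq by simp
  have "N \<noteq> {}"
    using Suc.hyps(2) by auto
  then obtain N' where "tree_pair_vertices N' (l - 1)" "card N' = card N - 1" and
    mu: "mu_list_on N l \<in> {mu \<in> Pl l. butlast mu = mu_list_on N' (l - 1)}
       \<union> tau l ` {mu \<in> Pl l. butlast mu = mu_list_on N' (l - 1)}"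
    by (rule mu_list_on_reduction)
  then have "mu_list_on N' (l - 1) \<in> P1 (l - 1)"
    using Suc.hyps by simp
  then show ?case
    using mu l by (auto simp: Let_def)
qed


subsection \<open>The vertices of a pair of trees\<close>

lemma path_in_butlast: "path_in t p \<Longrightarrow> path_in t (butlast p)"
  by (induction rule: path_in.induct) (auto intro: path_in.intros)

lemma paths_Node:
  "{p. path_in (Node ts) p} = insert [] (\<Union>i<length ts. (#) i ` {p. path_in (ts ! i) p})"
  by (subst path_in.simps) auto

lemma finite_card_paths: "finite {p. path_in t p} \<and> card {p. path_in t p} = Suc (edges t)"
proof (induction t)
  case (Node ts)
  then have IH: "finite {p. path_in (ts ! i) p}" "card {p. path_in (ts ! i) p} = Suc (edges (ts ! i))"
    if "i < length ts" for i
    using that nth_mem by blast+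
  let ?U = "\<Union>i<length ts. (#) i ` {p. path_in (ts ! i) p}"
  have "card ?U = (\<Sum>i<length ts. card ((#) i ` {p. path_in (ts ! i) p}))"
    by (rule card_UN_disjoint) (use IH in auto)
  also have "\<dots> = (\<Sum>i<length ts. Suc (edges (ts ! i)))"
    using IH by (simp add: card_image)
  also have "\<dots> = length ts + sum_list (map edges ts)"
    by (simp add: sum_Suc sum_list_sum_nth atLeast0LessThan)
  finally have "card ?U = length ts + sum_list (map edges ts)" .
  moreover have "finite ?U" "[] \<notin> ?U"
    using IH by auto
  ultimately show ?case
    unfolding paths_Node by simp
qed

lemma nonroot_verts_eq:
  "nonroot_verts Tm Tp =
     Pair False ` ({p. path_in Tm p} - {[]}) \<union> Pair True ` ({p. path_in Tp p} - {[]})"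
  unfolding nonroot_verts_def by (auto split: if_splits)

lemma tree_pair_vertices_nonroot_verts:
  assumes "l \<ge> 1" "edges Tm + edges Tp = l - 1"
  shows "tree_pair_vertices (nonroot_verts Tm Tp) l"
proof
  have card_side: "card (Pair s ` ({p. path_in T p} - {[]})) = edges T" for s T
    using finite_card_paths[of T] path_in.root[of T]
    by (simp add: card_image inj_on_def card_Diff_singleton)
  show "card (nonroot_verts Tm Tp) + 1 = l"
    unfolding nonroot_verts_eq
    using finite_card_paths card_side[of False Tm] card_side[of True Tp] assms
    by (subst card_Un_disjoint) auto
  show "finite (nonroot_verts Tm Tp)"
    unfolding nonroot_verts_eq using finite_card_paths by simp
qed (auto simp: nonroot_verts_def path_in_butlast)

theorem lemma4p4:
  fixes l :: nat and Tm Tp :: ptree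
  assumes "l \<ge> 1"
    and "edges Tm + edges Tp = l - 1"
  shows "mu_list l Tm Tp \<in> Pl l \<and> mu_list l Tm Tp \<in> P1 l"
proof -
  interpret tree_pair_vertices "nonroot_verts Tm Tp" l
    using assms by (rule tree_pair_vertices_nonroot_verts)
  show ?thesis
    unfolding mu_list_eq_mu_list_on
    using mu_list_on_in_Pl mu_list_on_in_P1[OF tree_pair_vertices_axioms] by simp
qed

end
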